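(* Let $\mathcal M=(G,In,Out,Leak)$ be a linear compartmental model with $In=Out=\{1\}$. Then for every positive integer $j$, $$\sum_{F^*\in\mathcal F_j^{1,1}(\widetilde G^*_1)}\pi_{F^*}=\sum_{F\in\mathcal F_j(\widetilde G_1)}\pi_F.$$
   Context: A linear compartmental model $\mathcal M=(G,In,Out,Leak)$ consists of a finite directed graph $G=(V_G,E_G)$ without multi-edges, compartments $V_G=\{1,\dots,n\}$, and subsets $In,Out,Leak\subseteq V_G$; edge $q\to p$ has label $a_{pq}$. The leak-augmented graph $\widetilde G$ is obtained from $G$ by adding a node $0$ and, for each $p\in Leak$, an edge $p\to0$ labeled $a_{0p}$. $\widetilde G^*_1$ is obtained from $\widetilde G$ by removing all edges outgoing from node $1$. $\widetilde G_1$ is obtained from $\widetilde G^*_1$ by replacing every edge $p\to1$ (label $a_{1p}$) by an edge $p\to0$ with the same label $a_{1p}$ (multi-edges are allowed, i.e. this edge is kept separate from any leak edge $p\to0$), and then deleting node $1$. A spanning incoming forest of a graph is a spanning subgraph whose underlying undirected graph has no cycles and in which each node has at most one outgoing edge. $\mathcal F_j(H)$ is the set of spanning incoming forests of $H$ with exactly $j$ edges, and $\mathcal F_j^{k,\ell}(H)$ those in which some connected component contains both $k$ and $\ell$. $\pi_F$ is the product of the edge labels of $F$ ($1$ if no edges). *)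

theory Defs
  imports Main
begin

text \<open>Edges of (multi)graphs are triples (source, target, label key); the label key
  (p, q) stands for the edge label a_pq.  Keeping the label key in the edge makes parallel
  edges with different labels distinct edges.\<close>

type_synonym medge = "nat \<times> nat \<times> (nat \<times> nat)"

definition src :: "medge \<Rightarrow> nat" where "src e = fst e"
definition tgt :: "medge \<Rightarrow> nat" where "tgt e = fst (snd e)"
definition lab :: "medge \<Rightarrow> nat \<times> nat" where "lab e = snd (snd e)"

text \<open>Linear compartmental model: compartments {1..n}, edge set E of pairs (q,p) meaning
  q \<rightarrow> p, and In, Out, Leak subsets of compartments.\<close>
definition lcm_model :: "nat \<Rightarrow> (nat \<times> nat) set \<Rightarrow> nat set \<Rightarrow> nat set \<Rightarrow> nat set \<Rightarrow> bool" where
  "lcm_model n E In Out Leak \<longleftrightarrow>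
     E \<subseteq> {1..n} \<times> {1..n} \<and> In \<subseteq> {1..n} \<and> Out \<subseteq> {1..n} \<and> Leak \<subseteq> {1..n}"

definition leak_aug_edges :: "(nat \<times> nat) set \<Rightarrow> nat set \<Rightarrow> medge set" where
  "leak_aug_edges E Leak =
     {(q, p, (p, q)) | q p. (q, p) \<in> E} \<union> {(p, 0, (0, p)) | p. p \<in> Leak}"

definition star1_edges :: "(nat \<times> nat) set \<Rightarrow> nat set \<Rightarrow> medge set" where
  "star1_edges E Leak = {e \<in> leak_aug_edges E Leak. src e \<noteq> 1}"

definition G1_edges :: "(nat \<times> nat) set \<Rightarrow> nat set \<Rightarrow> medge set" where
  "G1_edges E Leak =
     {e \<in> star1_edges E Leak. tgt e \<noteq> 1}
     \<union> {(src e, 0, lab e) | e. e \<in> star1_edges E Leak \<and> tgt e = 1}"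

definition has_ucycle :: "medge set \<Rightarrow> bool" where
  "has_ucycle F \<longleftrightarrow> (\<exists>es vs. es \<noteq> [] \<and> set es \<subseteq> F \<and> distinct es \<and>
      length vs = length es + 1 \<and> hd vs = last vs \<and> distinct (tl vs) \<and>
      (\<forall>i < length es. (src (es!i) = vs!i \<and> tgt (es!i) = vs!(Suc i)) \<or>
                       (tgt (es!i) = vs!i \<and> src (es!i) = vs!(Suc i))))"

definition sp_in_forest :: "nat set \<Rightarrow> medge set \<Rightarrow> medge set \<Rightarrow> bool" where
  "sp_in_forest V EH F \<longleftrightarrow> F \<subseteq> EH \<and> \<not> has_ucycle F \<and>
      (\<forall>e1\<in>F. \<forall>e2\<in>F. src e1 = src e2 \<longrightarrow> e1 = e2)"

definition forests :: "nat \<Rightarrow> nat set \<Rightarrow> medge set \<Rightarrow> medge set set" where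
  "forests j V EH = {F. sp_in_forest V EH F \<and> card F = j}"

definition same_comp :: "nat set \<Rightarrow> medge set \<Rightarrow> nat \<Rightarrow> nat \<Rightarrow> bool" where
  "same_comp V F k l \<longleftrightarrow> k \<in> V \<and> l \<in> V \<and>
     (k, l) \<in> ({(src e, tgt e) | e. e \<in> F} \<union> {(tgt e, src e) | e. e \<in> F})\<^sup>*"

definition forests_kl :: "nat \<Rightarrow> nat \<Rightarrow> nat \<Rightarrow> nat set \<Rightarrow> medge set \<Rightarrow> medge set set" where
  "forests_kl j k l V EH = {F \<in> forests j V EH. same_comp V F k l}"

definition piF :: "(nat \<Rightarrow> nat \<Rightarrow> 'a::comm_ring_1) \<Rightarrow> medge set \<Rightarrow> 'a" where
  "piF a F = (\<Prod>e\<in>F. a (fst (lab e)) (snd (lab e)))"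

end

theory Submission
  imports Defs
begin

text \<open>Redirecting every edge p \<rightarrow> 1 of \<open>G~*_1\<close> to p \<rightarrow> 0 is a bijection onto the edges of
  \<open>G~_1\<close> that preserves sources and labels, so it maps edge sets with at most one outgoing
  edge per node to such edge sets, preserving cardinality and \<open>\<pi>_F\<close>.  It also preserves
  acyclicity: in an undirected cycle whose edges have pairwise distinct sources, k edges meet
  k vertices, so every vertex of the cycle is the source of one of its edges.  Such a cycle
  therefore avoids the edges into 1 in \<open>G~*_1\<close> and the edges into 0 in \<open>G~_1\<close>, because neither
  node is a source there, and these are exactly the edges the redirection changes.  Finally
  every forest of \<open>G~*_1\<close> has 1 in the same component as itself, so the left-hand side
  ranges over all forests with j edges.\<close>

lemma has_ucycle_mono:
  assumes "has_ucycle F" and "F \<subseteq> F'"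
  shows "has_ucycle F'"
  using assms unfolding has_ucycle_def by (meson order_trans)

lemma set_tl_closed_walk:
  assumes "hd vs = last vs" and "length vs \<ge> 2"
  shows "set (tl vs) = set vs"
proof (cases vs)
  case (Cons v ws)
  with assms have "ws \<noteq> []" by auto
  with assms Cons have "v = last ws" by simp
  with Cons \<open>ws \<noteq> []\<close> show ?thesis by auto
qed (use assms in simp)

lemma has_ucycle_source_closed:
  assumes "has_ucycle F" and "inj_on src F"
  shows "has_ucycle {e \<in> F. tgt e \<in> src ` F}"
proof -
  obtain es vs where ne: "es \<noteq> []" and es_F: "set es \<subseteq> F" and dist_es: "distinct es"
    and len: "length vs = length es + 1" and closed: "hd vs = last vs"
    and dist_vs: "distinct (tl vs)"
    and walk: "\<forall>i < length es. (src (es!i) = vs!i \<and> tgt (es!i) = vs!(Suc i)) \<or>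
                               (tgt (es!i) = vs!i \<and> src (es!i) = vs!(Suc i))"
    using assms(1) unfolding has_ucycle_def by (elim exE conjE) (rule that; assumption)
  have ends: "src e \<in> set vs \<and> tgt e \<in> set vs" if e: "e \<in> set es" for e
  proof -
    obtain i where i: "i < length es" "es!i = e"
      using e by (auto simp: in_set_conv_nth)
    then have "vs!i \<in> set vs" "vs!Suc i \<in> set vs"
      using len by auto
    with walk i show ?thesis by auto
  qed
  have vs: "set (tl vs) = set vs"
    using closed len ne by (intro set_tl_closed_walk) (auto simp: Suc_le_eq)
  have "card (src ` set es) = length es"
    using inj_on_subset[OF assms(2) es_F] dist_es by (simp add: card_image distinct_card)
  also have "\<dots> = card (set vs)"
    using dist_vs len by (simp add: distinct_card flip: vs)
  finally have "src ` set es = set vs"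
    using ends by (intro card_subset_eq) auto
  with ends es_F have "set es \<subseteq> {e \<in> F. tgt e \<in> src ` F}"
    by blast
  then show ?thesis
    unfolding has_ucycle_def using ne dist_es len closed dist_vs walk
    by (intro exI[of _ es] exI[of _ vs]) blast
qed

lemma forests_eq_Collect_Pow:
  "forests j V EH = {F \<in> Pow EH. \<not> has_ucycle F \<and> inj_on src F \<and> card F = j}"
  unfolding forests_def sp_in_forest_def inj_on_def by blast

lemma forests_kl_diag:
  assumes "k \<in> V"
  shows "forests_kl j k k V EH = forests j V EH"
  using assms unfolding forests_kl_def same_comp_def by auto

lemma piF_image:
  assumes "inj_on f F" and "\<And>e. e \<in> F \<Longrightarrow> lab (f e) = lab e"
  shows "piF a (f ` F) = piF a F"
  using assms unfolding piF_def by (simp add: prod.reindex)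

lemma inj_on_src_image_iff:
  assumes "inj_on f F" and "\<And>e. e \<in> F \<Longrightarrow> src (f e) = src e"
  shows "inj_on src (f ` F) \<longleftrightarrow> inj_on src F"
proof -
  have "inj_on src (f ` F) \<longleftrightarrow> inj_on (src \<circ> f) F"
    using assms(1) by (rule comp_inj_on_iff)
  also have "\<dots> \<longleftrightarrow> inj_on src F"
    using assms(2) by (intro inj_on_cong) simp
  finally show ?thesis .
qed

lemma leak_aug_edges_tgt_lab:
  "e \<in> leak_aug_edges E Leak \<Longrightarrow> tgt e = fst (lab e)"
  unfolding leak_aug_edges_def tgt_def lab_def by auto

lemma leak_aug_edges_src_nonzero:
  assumes "lcm_model n E In Out Leak" and "e \<in> leak_aug_edges E Leak"
  shows "src e \<noteq> 0"
  using assms unfolding lcm_model_def leak_aug_edges_def src_def by auto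

lemma star1_edges_src: "e \<in> star1_edges E Leak \<Longrightarrow> src e \<noteq> 1"
  unfolding star1_edges_def by simp

definition redirect1 :: "medge \<Rightarrow> medge" where
  "redirect1 e = (if tgt e = 1 then (src e, 0, lab e) else e)"

lemma src_redirect1 [simp]: "src (redirect1 e) = src e"
  by (simp add: redirect1_def src_def)

lemma lab_redirect1 [simp]: "lab (redirect1 e) = lab e"
  by (simp add: redirect1_def lab_def)

lemma tgt_redirect1_nonzero_iff: "tgt (redirect1 e) \<noteq> 0 \<longleftrightarrow> tgt e \<noteq> 0 \<and> tgt e \<noteq> 1"
  by (simp add: redirect1_def tgt_def)

lemma redirect1_id: "tgt e \<noteq> 1 \<Longrightarrow> redirect1 e = e"
  by (simp add: redirect1_def)

text \<open>The label of a leak-augmented edge records its target, so the redirection is injective.\<close>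

lemma inj_on_redirect1_star1_edges: "inj_on redirect1 (star1_edges E Leak)"
proof (rule inj_onI)
  fix e e' assume e: "e \<in> star1_edges E Leak" and e': "e' \<in> star1_edges E Leak"
    and eq: "redirect1 e = redirect1 e'"
  have "src e = src e'" "lab e = lab e'"
    using arg_cong[OF eq, of src] arg_cong[OF eq, of lab] by simp_all
  moreover have "e \<in> leak_aug_edges E Leak" "e' \<in> leak_aug_edges E Leak"
    using e e' by (simp_all add: star1_edges_def)
  then have "tgt e = tgt e'"
    using \<open>lab e = lab e'\<close> by (simp add: leak_aug_edges_tgt_lab)
  ultimately show "e = e'"
    unfolding src_def tgt_def lab_def by (simp add: prod_eq_iff)
qed

lemma G1_edges_eq_image_redirect1: "G1_edges E Leak = redirect1 ` star1_edges E Leak"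
  unfolding G1_edges_def redirect1_def by auto

lemma bij_betw_redirect1: "bij_betw redirect1 (star1_edges E Leak) (G1_edges E Leak)"
  by (simp add: bij_betw_def inj_on_redirect1_star1_edges G1_edges_eq_image_redirect1)

lemma has_ucycle_image_redirect1_iff:
  assumes "lcm_model n E In Out Leak" and F: "F \<subseteq> star1_edges E Leak"
    and inj_src: "inj_on src F"
  shows "has_ucycle (redirect1 ` F) \<longleftrightarrow> has_ucycle F"
proof
  assume cycle: "has_ucycle (redirect1 ` F)"
  have inj: "inj_on redirect1 F"
    using F inj_on_redirect1_star1_edges inj_on_subset by blast
  have "inj_on src (redirect1 ` F)"
    using inj_src inj_on_src_image_iff[OF inj] by simp
  moreover have "{e \<in> redirect1 ` F. tgt e \<in> src ` redirect1 ` F} \<subseteq> F"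
  proof
    fix e' assume e': "e' \<in> {e \<in> redirect1 ` F. tgt e \<in> src ` redirect1 ` F}"
    then obtain e where e: "e \<in> F" "e' = redirect1 e"
      by blast
    have "tgt e' \<in> src ` F"
      using e' by (simp add: image_image)
    then obtain x where x: "x \<in> leak_aug_edges E Leak" "tgt e' = src x"
      using F unfolding star1_edges_def by blast
    have "src x \<noteq> 0"
      by (rule leak_aug_edges_src_nonzero[OF assms(1) x(1)])
    with x(2) e(2) have "tgt (redirect1 e) \<noteq> 0"
      by simp
    then have "tgt e \<noteq> 1"
      using tgt_redirect1_nonzero_iff by blast
    then show "e' \<in> F"
      using e by (simp add: redirect1_id)
  qed
  ultimately show "has_ucycle F"
    using has_ucycle_source_closed[OF cycle] has_ucycle_mono by blast
next
  assume cycle: "has_ucycle F"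
  have "{e \<in> F. tgt e \<in> src ` F} \<subseteq> redirect1 ` F"
  proof
    fix e assume "e \<in> {e \<in> F. tgt e \<in> src ` F}"
    then obtain f where "e \<in> F" "f \<in> F" "tgt e = src f"
      by blast
    moreover have "src f \<noteq> 1"
      using star1_edges_src[OF subsetD[OF F \<open>f \<in> F\<close>]] .
    ultimately have "e \<in> F" and "tgt e \<noteq> 1"
      by simp_all
    then show "e \<in> redirect1 ` F"
      by (metis image_eqI redirect1_id)
  qed
  with has_ucycle_source_closed[OF cycle inj_src] show "has_ucycle (redirect1 ` F)"
    by (rule has_ucycle_mono)
qed

lemma bij_betw_image_redirect1_forests:
  assumes "lcm_model n E In Out Leak"
  shows "bij_betw (image redirect1) (forests j V (star1_edges E Leak))
           (forests j V' (G1_edges E Leak))"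
  unfolding forests_eq_Collect_Pow
proof (rule bij_betw_Collect[OF bij_betw_image_Pow[OF bij_betw_redirect1]])
  fix F assume "F \<in> Pow (star1_edges E Leak)"
  then have F: "F \<subseteq> star1_edges E Leak" by simp
  then have inj: "inj_on redirect1 F"
    using inj_on_redirect1_star1_edges inj_on_subset by blast
  have "inj_on src (redirect1 ` F) \<longleftrightarrow> inj_on src F"
    using inj_on_src_image_iff[OF inj] by simp
  moreover have "card (redirect1 ` F) = card F"
    using inj by (rule card_image)
  ultimately show "(\<not> has_ucycle (redirect1 ` F) \<and> inj_on src (redirect1 ` F) \<and>
      card (redirect1 ` F) = j) \<longleftrightarrow> (\<not> has_ucycle F \<and> inj_on src F \<and> card F = j)"
    using has_ucycle_image_redirect1_iff[OF assms F] by (cases "inj_on src F") simp_all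
qed

theorem lemma3p11:
  fixes n j :: nat and E :: "(nat \<times> nat) set" and In Out Leak :: "nat set"
    and a :: "nat \<Rightarrow> nat \<Rightarrow> 'a::comm_ring_1"
  assumes "lcm_model n E In Out Leak"
    and "In = {1}" and "Out = {1}"
    and "j > 0"
  shows "(\<Sum>F\<in>forests_kl j 1 1 {0..n} (star1_edges E Leak). piF a F)
       = (\<Sum>F\<in>forests j ({0..n} - {1}) (G1_edges E Leak). piF a F)"
proof -
  have "1 \<in> {0..n}"
    using assms(1,2) unfolding lcm_model_def by auto
  have piF_redirect1: "piF a (redirect1 ` F) = piF a F"
    if "F \<in> forests j {0..n} (star1_edges E Leak)" for F
    using that inj_on_subset[OF inj_on_redirect1_star1_edges]
    by (intro piF_image) (auto simp: forests_def sp_in_forest_def)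
  have "(\<Sum>F\<in>forests j ({0..n} - {1}) (G1_edges E Leak). piF a F)
      = (\<Sum>F\<in>forests j {0..n} (star1_edges E Leak). piF a (redirect1 ` F))"
    by (rule sum.reindex_bij_betw[symmetric, OF bij_betw_image_redirect1_forests[OF assms(1)]])
  also have "\<dots> = (\<Sum>F\<in>forests j {0..n} (star1_edges E Leak). piF a F)"
    using piF_redirect1 by simp
  finally show ?thesis
    using forests_kl_diag[OF \<open>1 \<in> {0..n}\<close>] by simp
qed

end
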